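(* Let $K$ be a number field, let $\alpha,\beta$ be multiplicatively independent positive rational numbers, and let $F\in K[[x^{\mathbb{R}}]]$ be a Hahn series satisfying nontrivial homogeneous equations $\sum_{i=0}^{d_1}P_i(x)F(x^{\alpha^i})=0$ and $\sum_{i=0}^{d_2}Q_i(x)F(x^{\beta^i})=0$ with $P_i,Q_i\in K[x]$, $P_{d_1}\ne0$, $Q_{d_2}\ne0$. Fix an integer $N>0$. Then there is a positive integer $l$ such that for all integers $m,n$ with $|m|<N$ and $|n|<N$, the Hahn series $F(x^l)$ is $\alpha^n\beta^m$-Mahler, i.e. there exist $e\ge0$ and $R_0,\dots,R_e\in K[x]$ not all zero with $\sum_{j=0}^e R_j(x)F\big(x^{l(\alpha^n\beta^m)^j}\big)=0$.
   Context: $K[[x^{\mathbb{R}}]]$ is the field of Hahn series $\sum_{i\in\mathbb{R}} f_ix^i$ ($f_i\in K$) with well-ordered support; $F(x^\gamma)=\sum_if_ix^{\gamma i}$ for $\gamma>0$. Positive reals $\alpha,\beta$ are multiplicatively independent if $\log\alpha/\log\beta\notin\mathbb{Q}$. *)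

theory Defs
  imports "HOL-Analysis.Analysis" "HOL-Computational_Algebra.Polynomial"
begin

definition number_field :: "complex set \<Rightarrow> bool" where
  "number_field K \<longleftrightarrow>
     0 \<in> K \<and> 1 \<in> K \<and>
     (\<forall>a\<in>K. \<forall>b\<in>K. a + b \<in> K \<and> a * b \<in> K \<and> - a \<in> K) \<and>
     (\<forall>a\<in>K. a \<noteq> 0 \<longrightarrow> inverse a \<in> K) \<and>
     (\<exists>B. finite B \<and> B \<subseteq> K \<and>
        (\<forall>z\<in>K. \<exists>c :: complex \<Rightarrow> rat. z = (\<Sum>b\<in>B. of_rat (c b) * b)))"

text \<open>Hahn series with coefficients in K: f i is the coefficient of x^i; support well-ordered.\<close>
definition hahn_series :: "complex set \<Rightarrow> (real \<Rightarrow> complex) \<Rightarrow> bool" where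
  "hahn_series K f \<longleftrightarrow> (\<forall>i. f i \<in> K) \<and>
     (\<forall>S. S \<subseteq> {i. f i \<noteq> 0} \<and> S \<noteq> {} \<longrightarrow> (\<exists>m\<in>S. \<forall>s\<in>S. m \<le> s))"

text \<open>F(x^gamma) = sum_i f_i x^(gamma i): coefficient of x^j is f (j / gamma).\<close>
definition hsubst :: "real \<Rightarrow> (real \<Rightarrow> complex) \<Rightarrow> (real \<Rightarrow> complex)" where
  "hsubst \<gamma> f = (\<lambda>j. f (j / \<gamma>))"

definition pmul :: "complex poly \<Rightarrow> (real \<Rightarrow> complex) \<Rightarrow> (real \<Rightarrow> complex)" where
  "pmul p f = (\<lambda>i. \<Sum>k\<le>degree p. coeff p k * f (i - real k))"

definition poly_over :: "complex set \<Rightarrow> complex poly \<Rightarrow> bool" where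
  "poly_over K p \<longleftrightarrow> (\<forall>k. coeff p k \<in> K)"

definition mahler :: "complex set \<Rightarrow> real \<Rightarrow> (real \<Rightarrow> complex) \<Rightarrow> bool" where
  "mahler K \<gamma> G \<longleftrightarrow> (\<exists>(e::nat) R. (\<forall>j\<le>e. poly_over K (R j)) \<and> (\<exists>j\<le>e. R j \<noteq> 0) \<and>
      (\<lambda>i. \<Sum>j\<le>e. pmul (R j) (hsubst (\<gamma> ^ j) G) i) = (\<lambda>_. 0))"

definition mult_indep :: "real \<Rightarrow> real \<Rightarrow> bool" where
  "mult_indep a b \<longleftrightarrow> ln a / ln b \<notin> \<rat>"

end

theory Submission
  imports Defs
begin

text \<open>
  Substituting \<open>x\<^sup>s\<close> into the \<open>\<alpha>\<close>-equation and discarding its vanishing lowest terms gives a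
  recurrence of some length \<open>L\<^sub>1 \<le> d\<^sub>1\<close>, with nonzero extreme coefficients, among the series
  \<open>F(x\<^bsup>s \<alpha>\<^sup>i\<^esup>)\<close>; likewise for \<open>\<beta>\<close> with \<open>L\<^sub>2 \<le> d\<^sub>2\<close>. Choose \<open>l\<close> so that every \<open>l \<alpha>\<^sup>a \<beta>\<^sup>b\<close>
  with \<open>|a|, |b| \<le> T\<close> is a positive integer. Then both recurrences can be run forwards and
  backwards in \<open>a\<close> and in \<open>b\<close>, so all \<open>F(x\<^bsup>l \<alpha>\<^sup>a \<beta>\<^sup>b\<^esup>)\<close> lie in the \<open>K(x)\<close>-span of the
  \<open>L\<^sub>1 L\<^sub>2 \<le> d\<^sub>1 d\<^sub>2\<close> series with \<open>0 \<le> a < L\<^sub>1\<close>, \<open>0 \<le> b < L\<^sub>2\<close>. For \<open>\<gamma> = \<alpha>\<^sup>n \<beta>\<^sup>m\<close> the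
  \<open>d\<^sub>1 d\<^sub>2 + 1\<close> series \<open>F(x\<^bsup>l \<gamma>\<^sup>j\<^esup>)\<close>, \<open>j \<le> d\<^sub>1 d\<^sub>2\<close>, are therefore \<open>K[x]\<close>-linearly dependent.
\<close>

section \<open>Polynomials acting on series\<close>

lemma pmul_eq_sum_atMost:
  assumes "degree p \<le> n"
  shows "pmul p f t = (\<Sum>k\<le>n. coeff p k * f (t - real k))"
  unfolding pmul_def by (rule sum.mono_neutral_left) (auto simp: coeff_eq_0 assms)

lemma pmul_0 [simp]: "pmul 0 f t = 0"
  by (simp add: pmul_def)

lemma pmul_add: "pmul (p + q) f t = pmul p f t + pmul q f t"
proof -
  let ?n = "max (degree p) (degree q)"
  have "degree (p + q) \<le> ?n"
    by (rule degree_add_le) auto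
  then show ?thesis
    by (simp add: pmul_eq_sum_atMost[of _ ?n] sum.distrib distrib_right)
qed

lemma pmul_smult: "pmul (smult c p) f t = c * pmul p f t"
  by (simp add: pmul_eq_sum_atMost[OF degree_smult_le] pmul_def sum_distrib_left mult.assoc)

lemma pmul_uminus: "pmul (- p) f t = - pmul p f t"
  by (simp add: pmul_def sum_negf)

lemma pmul_const [simp]: "pmul [:c:] f t = c * f t"
  by (simp add: pmul_def)

lemma pmul_1 [simp]: "pmul 1 f = f"
  by (simp add: pmul_def)

lemma pmul_pCons: "pmul (pCons a p) f t = a * f t + pmul p f (t - 1)"
proof -
  have "pmul (pCons a p) f t = (\<Sum>k\<le>Suc (degree p). coeff (pCons a p) k * f (t - real k))"
    by (rule pmul_eq_sum_atMost) (rule degree_pCons_le)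
  also have "\<dots> = a * f t + (\<Sum>k\<le>degree p. coeff p k * f (t - 1 - real k))"
    by (subst sum.atMost_Suc_shift) (simp add: algebra_simps)
  finally show ?thesis
    by (simp add: pmul_def)
qed

lemma pmul_mult: "pmul (p * q) f = pmul p (pmul q f)"
  by (induction p rule: pCons_induct) (auto simp: pmul_add pmul_smult pmul_pCons)

lemma pmul_monom: "pmul (monom 1 s) f t = f (t - real s)"
proof -
  have "pmul (monom 1 s) f t = (\<Sum>k\<le>s. coeff (monom 1 s) k * f (t - real k))"
    by (rule pmul_eq_sum_atMost) (rule degree_monom_le)
  also have "\<dots> = (\<Sum>k\<le>s. if k = s then f (t - real k) else 0)"
    by (rule sum.cong) auto
  finally show ?thesis
    by simp
qed

lemma pmul_sum_left: "pmul (\<Sum>i\<in>I. p i) f t = (\<Sum>i\<in>I. pmul (p i) f t)"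
  by (induction I rule: infinite_finite_induct) (simp_all add: pmul_add)

lemma pmul_sum_right: "pmul p (\<lambda>t. \<Sum>i\<in>I. f i t) = (\<lambda>t. \<Sum>i\<in>I. pmul p (f i) t)"
  unfolding pmul_def by (simp add: sum_distrib_left sum.swap[of _ "{..degree p}"])

lemma hsubst_hsubst: "hsubst c (hsubst \<rho> f) = hsubst (c * \<rho>) f"
  by (simp add: hsubst_def divide_divide_eq_left)

lemma pmul_pcompose_monom:
  assumes "s > 0"
  shows "pmul (pcompose p (monom 1 s)) (hsubst (real s) f) = hsubst (real s) (pmul p f)"
proof (induction p rule: pCons_induct)
  case (pCons a p)
  show ?case
  proof
    fix t
    have "pmul (pcompose (pCons a p) (monom 1 s)) (hsubst (real s) f) t
        = a * f (t / real s) + pmul (pcompose p (monom 1 s)) (hsubst (real s) f) (t - real s)"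
      by (simp add: pcompose_pCons pmul_add pmul_mult pmul_monom hsubst_def)
    also have "\<dots> = a * f (t / real s) + hsubst (real s) (pmul p f) (t - real s)"
      by (simp add: pCons.IH)
    also have "\<dots> = hsubst (real s) (pmul (pCons a p) f) t"
      using assms by (simp add: hsubst_def pmul_pCons diff_divide_distrib)
    finally show "pmul (pcompose (pCons a p) (monom 1 s)) (hsubst (real s) f) t
        = hsubst (real s) (pmul (pCons a p) f) t" .
  qed
qed (simp add: hsubst_def fun_eq_iff)

section \<open>Linear algebra over a subring\<close>

definition ring_closed :: "'a::comm_ring_1 set \<Rightarrow> bool" where
  "ring_closed S \<longleftrightarrow> 0 \<in> S \<and> 1 \<in> S \<and> (\<forall>a\<in>S. \<forall>b\<in>S. a + b \<in> S \<and> a * b \<in> S \<and> - a \<in> S)"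

lemma number_field_ring_closed: "number_field K \<Longrightarrow> ring_closed K"
  unfolding number_field_def ring_closed_def by blast

lemma ring_closed_diff: "ring_closed S \<Longrightarrow> a \<in> S \<Longrightarrow> b \<in> S \<Longrightarrow> a - b \<in> S"
  unfolding ring_closed_def by (metis diff_conv_add_uminus)

lemma ring_closed_sum:
  assumes "ring_closed S" "\<And>i. i \<in> I \<Longrightarrow> f i \<in> S"
  shows "sum f I \<in> S"
  using assms(2) by (induction I rule: infinite_finite_induct) (use assms(1) in \<open>auto simp: ring_closed_def\<close>)

lemma ring_closed_poly_over:
  assumes "ring_closed K"
  shows "ring_closed {p. poly_over K p}"
  using assms unfolding ring_closed_def poly_over_def
  by (auto simp: coeff_1 coeff_mult intro!: ring_closed_sum[OF assms])

context
  fixes K :: "complex set"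
  assumes K: "ring_closed K"
begin

lemma poly_over_0: "poly_over K 0"
  and poly_over_1: "poly_over K 1"
  and poly_over_add: "poly_over K p \<Longrightarrow> poly_over K q \<Longrightarrow> poly_over K (p + q)"
  and poly_over_mult: "poly_over K p \<Longrightarrow> poly_over K q \<Longrightarrow> poly_over K (p * q)"
  and poly_over_uminus: "poly_over K p \<Longrightarrow> poly_over K (- p)"
  using ring_closed_poly_over[OF K] unfolding ring_closed_def by auto

lemma poly_over_pcompose_monom:
  assumes "poly_over K p"
  shows "poly_over K (pcompose p (monom 1 s))"
  using assms
proof (induction p rule: pCons_induct)
  case (pCons a p)
  then have "a \<in> K" "poly_over K p"
    unfolding poly_over_def by (metis coeff_pCons_0, metis coeff_pCons_Suc)
  moreover have "poly_over K [:a:]" "poly_over K (monom 1 s)"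
    using K \<open>a \<in> K\<close> by (auto simp: poly_over_def ring_closed_def coeff_pCons split: nat.split)
  ultimately show ?case
    by (simp add: pcompose_pCons poly_over_add poly_over_mult pCons.IH)
qed (simp add: poly_over_0)

end

lemma homogeneous_system_nontrivial_solution:
  fixes v :: "'i \<Rightarrow> 'j \<Rightarrow> 'a::idom"
  assumes S: "ring_closed S"
    and "finite J" "finite I" "card J < card I" "\<And>i j. i \<in> I \<Longrightarrow> j \<in> J \<Longrightarrow> v i j \<in> S"
  shows "\<exists>x. (\<forall>i\<in>I. x i \<in> S) \<and> (\<exists>i\<in>I. x i \<noteq> 0) \<and> (\<forall>j\<in>J. (\<Sum>i\<in>I. x i * v i j) = 0)"
  using assms(2-)
proof (induction J arbitrary: I v rule: finite_induct)
  case empty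
  then have "I \<noteq> {}"
    by auto
  then show ?case
    using S by (intro exI[of _ "\<lambda>_. 1"]) (auto simp: ring_closed_def)
next
  case (insert j0 J)
  show ?case
  proof (cases "\<forall>i\<in>I. v i j0 = 0")
    case True
    then show ?thesis
      using insert.IH[of I v] insert.prems insert.hyps by (auto simp: card_insert_if)
  next
    case False
    then obtain p where p: "p \<in> I" "v p j0 \<noteq> 0"
      by auto
    define c where "c = v p j0"
    define I' where "I' = I - {p}"
    \<comment> \<open>Gaussian elimination of the unknown \<open>p\<close> with pivot \<open>c\<close>; every \<open>v' i j0\<close> vanishes.\<close>
    define v' where "v' i j = c * v i j - v i j0 * v p j" for i j
    have "v' i j \<in> S" if "i \<in> I'" "j \<in> J" for i j
      using that p insert.prems S unfolding v'_def c_def I'_def ring_closed_def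
      by (intro ring_closed_diff[OF S]) auto
    moreover have "finite I'" "card J < card I'"
      using insert p unfolding I'_def by auto
    ultimately obtain x' where x': "\<forall>i\<in>I'. x' i \<in> S" "\<exists>i\<in>I'. x' i \<noteq> 0"
      "\<forall>j\<in>J. (\<Sum>i\<in>I'. x' i * v' i j) = 0"
      using insert.IH[of I' v'] by blast
    define z where "z = (\<Sum>i\<in>I'. x' i * v i j0)"
    define x where "x i = (if i = p then - z else c * x' i)" for i
    have x_eq: "(\<Sum>i\<in>I. x i * v i j) = (\<Sum>i\<in>I'. x' i * v' i j)" for j
    proof -
      have "(\<Sum>i\<in>I. x i * v i j) = - z * v p j + (\<Sum>i\<in>I'. c * x' i * v i j)"
        using p insert.prems unfolding I'_def x_def by (simp add: sum.remove)
      then show ?thesis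
        by (simp add: v'_def z_def algebra_simps sum_distrib_left sum_distrib_right sum_subtractf)
    qed
    have "z \<in> S"
      unfolding z_def using x'(1) insert.prems S
      by (intro ring_closed_sum[OF S]) (auto simp: I'_def ring_closed_def)
    then have "x i \<in> S" if "i \<in> I" for i
      using that x'(1) insert.prems p S unfolding x_def c_def I'_def ring_closed_def by auto
    moreover have "\<exists>i\<in>I. x i \<noteq> 0"
      using x'(2) p unfolding x_def I'_def c_def by auto
    moreover have "(\<Sum>i\<in>I. x i * v i j) = 0" if "j \<in> insert j0 J" for j
      using that x'(3) by (auto simp: x_eq v'_def c_def)
    ultimately show ?thesis
      by blast
  qed
qed

section \<open>Spans over \<open>K[x]\<close> and \<open>K(x)\<close>\<close>

text \<open>\<open>frac_span K B\<close> is the \<open>K(x)\<close>-span of \<open>B\<close>, encoded by clearing one denominator \<open>D\<close>.\<close>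

definition poly_span :: "complex set \<Rightarrow> (real \<Rightarrow> complex) set \<Rightarrow> (real \<Rightarrow> complex) set" where
  "poly_span K B = {g. \<exists>c. (\<forall>f\<in>B. poly_over K (c f)) \<and> (\<forall>t. g t = (\<Sum>f\<in>B. pmul (c f) f t))}"

definition frac_span :: "complex set \<Rightarrow> (real \<Rightarrow> complex) set \<Rightarrow> (real \<Rightarrow> complex) set" where
  "frac_span K B = {g. \<exists>D. poly_over K D \<and> D \<noteq> 0 \<and> pmul D g \<in> poly_span K B}"

context
  fixes K :: "complex set" and B :: "(real \<Rightarrow> complex) set"
  assumes K: "ring_closed K"
begin

lemma poly_span_zero: "(\<lambda>_. 0) \<in> poly_span K B"
  unfolding poly_span_def by (auto intro!: exI[of _ "\<lambda>_. 0"] poly_over_0[OF K])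

lemma poly_span_add:
  assumes "g1 \<in> poly_span K B" "g2 \<in> poly_span K B"
  shows "(\<lambda>t. g1 t + g2 t) \<in> poly_span K B"
proof -
  obtain c1 c2 where "\<forall>f\<in>B. poly_over K (c1 f)" "\<forall>t. g1 t = (\<Sum>f\<in>B. pmul (c1 f) f t)"
    "\<forall>f\<in>B. poly_over K (c2 f)" "\<forall>t. g2 t = (\<Sum>f\<in>B. pmul (c2 f) f t)"
    using assms unfolding poly_span_def by blast
  then show ?thesis
    unfolding poly_span_def
    by (auto intro!: exI[of _ "\<lambda>f. c1 f + c2 f"] poly_over_add[OF K] simp: pmul_add sum.distrib)
qed

lemma poly_span_sum: "(\<And>i. i \<in> I \<Longrightarrow> g i \<in> poly_span K B) \<Longrightarrow> (\<lambda>t. \<Sum>i\<in>I. g i t) \<in> poly_span K B"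
  by (induction I rule: infinite_finite_induct) (auto simp: poly_span_zero intro: poly_span_add)

lemma poly_span_pmul:
  assumes "poly_over K p" "g \<in> poly_span K B"
  shows "pmul p g \<in> poly_span K B"
proof -
  obtain c where c: "\<forall>f\<in>B. poly_over K (c f)" and g: "g = (\<lambda>t. \<Sum>f\<in>B. pmul (c f) f t)"
    using assms(2) unfolding poly_span_def by auto
  have "pmul p g t = (\<Sum>f\<in>B. pmul (p * c f) f t)" for t
    by (simp add: g pmul_sum_right pmul_mult)
  then show ?thesis
    using assms(1) c unfolding poly_span_def by (auto intro!: exI[of _ "\<lambda>f. p * c f"] poly_over_mult[OF K])
qed

lemma basis_in_frac_span:
  assumes "finite B" "f \<in> B"
  shows "f \<in> frac_span K B"
proof -
  have "f t = (\<Sum>f'\<in>B. pmul (if f' = f then 1 else 0) f' t)" for t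
    using assms by (simp add: if_distrib[of "\<lambda>p. pmul p _ t"] cong: if_cong)
  then have "pmul 1 f \<in> poly_span K B"
    unfolding poly_span_def by (auto intro!: exI[of _ "\<lambda>f'. if f' = f then 1 else 0"] simp: poly_over_0[OF K] poly_over_1[OF K])
  then show ?thesis
    unfolding frac_span_def using poly_over_1[OF K] by fastforce
qed

lemma frac_span_common_denominator:
  assumes "finite I" "\<And>i. i \<in> I \<Longrightarrow> g i \<in> frac_span K B"
  shows "\<exists>D. poly_over K D \<and> D \<noteq> 0 \<and> (\<forall>i\<in>I. pmul D (g i) \<in> poly_span K B)"
  using assms
proof (induction I rule: finite_induct)
  case empty
  then show ?case
    using poly_over_1[OF K] by fastforce
next
  case (insert x I)
  then obtain D where D: "poly_over K D" "D \<noteq> 0" "\<forall>i\<in>I. pmul D (g i) \<in> poly_span K B"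
    by auto
  obtain Dx where Dx: "poly_over K Dx" "Dx \<noteq> 0" "pmul Dx (g x) \<in> poly_span K B"
    using insert.prems unfolding frac_span_def by auto
  have "pmul (D * Dx) (g x) \<in> poly_span K B"
    using poly_span_pmul[OF D(1) Dx(3)] by (simp add: pmul_mult)
  moreover have "pmul (D * Dx) (g i) \<in> poly_span K B" if "i \<in> I" for i
    using poly_span_pmul[OF Dx(1)] D(3) that by (simp add: mult.commute[of D Dx] pmul_mult)
  ultimately have "\<forall>i\<in>insert x I. pmul (D * Dx) (g i) \<in> poly_span K B"
    by blast
  then show ?case
    using D Dx by (intro exI[of _ "D * Dx"]) (simp add: poly_over_mult[OF K])
qed

lemma frac_span_closed:
  assumes "finite I" "poly_over K A" "A \<noteq> 0" "\<And>i. i \<in> I \<Longrightarrow> poly_over K (C i)"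
    and "\<And>i. i \<in> I \<Longrightarrow> g i \<in> frac_span K B"
    and eq: "pmul A g0 = (\<lambda>t. \<Sum>i\<in>I. pmul (C i) (g i) t)"
  shows "g0 \<in> frac_span K B"
proof -
  obtain D where D: "poly_over K D" "D \<noteq> 0" "\<forall>i\<in>I. pmul D (g i) \<in> poly_span K B"
    using frac_span_common_denominator[of I g] assms(1,5) by blast
  have "pmul (D * A) g0 = pmul D (\<lambda>t. \<Sum>i\<in>I. pmul (C i) (g i) t)"
    by (simp add: pmul_mult eq)
  also have "\<dots> = (\<lambda>t. \<Sum>i\<in>I. pmul (C i) (pmul D (g i)) t)"
    by (simp add: pmul_sum_right pmul_mult[symmetric] mult.commute)
  also have "\<dots> \<in> poly_span K B"
    using D(3) by (intro poly_span_sum poly_span_pmul[OF assms(4)]) auto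
  finally show ?thesis
    unfolding frac_span_def using D assms(2,3) by (auto intro!: exI[of _ "D * A"] poly_over_mult[OF K])
qed

lemma frac_span_dependent:
  assumes "finite B" "card B \<le> e" "\<And>j. j \<le> e \<Longrightarrow> g j \<in> frac_span K B"
  shows "\<exists>R. (\<forall>j\<le>e. poly_over K (R j)) \<and> (\<exists>j\<le>e. R j \<noteq> 0) \<and> (\<forall>t. (\<Sum>j\<le>e. pmul (R j) (g j) t) = 0)"
proof -
  obtain D where D: "poly_over K D" "D \<noteq> 0" "\<forall>j\<le>e. pmul D (g j) \<in> poly_span K B"
    using frac_span_common_denominator[of "{..e}" g] assms(3) by auto
  then have "\<forall>j\<in>{..e}. \<exists>c. (\<forall>f\<in>B. poly_over K (c f)) \<and> pmul D (g j) = (\<lambda>t. \<Sum>f\<in>B. pmul (c f) f t)"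
    unfolding poly_span_def by fastforce
  then obtain c where c: "\<And>j f. j \<le> e \<Longrightarrow> f \<in> B \<Longrightarrow> poly_over K (c j f)"
    "\<And>j. j \<le> e \<Longrightarrow> pmul D (g j) = (\<lambda>t. \<Sum>f\<in>B. pmul (c j f) f t)"
    by (metis atMost_iff bchoice)
  obtain x where x: "\<forall>j\<le>e. poly_over K (x j)" "\<exists>j\<le>e. x j \<noteq> 0"
    "\<forall>f\<in>B. (\<Sum>j\<le>e. x j * c j f) = 0"
    using homogeneous_system_nontrivial_solution[OF ring_closed_poly_over[OF K] assms(1), of "{..e}" c]
      assms(2) c(1) by auto
  have "(\<Sum>j\<le>e. pmul (x j * D) (g j) t) = 0" for t
  proof -
    have "(\<Sum>j\<le>e. pmul (x j * D) (g j) t) = (\<Sum>j\<le>e. \<Sum>f\<in>B. pmul (x j * c j f) f t)"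
      by (intro sum.cong refl) (simp add: pmul_mult c(2) pmul_sum_right)
    also have "\<dots> = (\<Sum>f\<in>B. pmul (\<Sum>j\<le>e. x j * c j f) f t)"
      by (subst sum.swap) (simp add: pmul_sum_left)
    finally show ?thesis
      using x(3) by simp
  qed
  then show ?thesis
    using x(1,2) D(1,2) by (intro exI[of _ "\<lambda>j. x j * D"]) (auto intro: poly_over_mult[OF K])
qed

end

section \<open>Recurrences\<close>

definition nondegenerate_relation :: "complex set \<Rightarrow> nat \<Rightarrow> (nat \<Rightarrow> real \<Rightarrow> complex) \<Rightarrow> bool" where
  "nondegenerate_relation K L H \<longleftrightarrow> (\<exists>A. (\<forall>i\<le>L. poly_over K (A i)) \<and> A 0 \<noteq> 0 \<and> A L \<noteq> 0 \<and>
     (\<lambda>t. \<Sum>i\<le>L. pmul (A i) (H i) t) = (\<lambda>_. 0))"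

lemma nondegenerate_relation_cong:
  assumes "nondegenerate_relation K L H" "\<And>i. i \<le> L \<Longrightarrow> H i = H' i"
  shows "nondegenerate_relation K L H'"
  using assms unfolding nondegenerate_relation_def by (metis (no_types, lifting) atMost_iff sum.cong)

lemma nondegenerate_relation_trim:
  assumes "\<forall>i\<le>d. poly_over K (P i)" "P d \<noteq> 0" "(\<lambda>t. \<Sum>i\<le>d. pmul (P i) (H i) t) = (\<lambda>_. 0)"
  shows "\<exists>i0 L. i0 + L = d \<and> nondegenerate_relation K L (\<lambda>i. H (i0 + i))"
proof -
  define i0 where "i0 = (LEAST i. P i \<noteq> 0)"
  have "i0 \<le> d"
    unfolding i0_def using assms(2) by (rule Least_le)
  have "P i0 \<noteq> 0"
    unfolding i0_def using assms(2) by (rule LeastI)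
  have below_i0: "P i = 0" if "i < i0" for i
    using not_less_Least[of i "\<lambda>i. P i \<noteq> 0"] that unfolding i0_def by auto
  have "(\<Sum>i\<le>d - i0. pmul (P (i0 + i)) (H (i0 + i)) t) = (\<Sum>i\<le>d. pmul (P i) (H i) t)" for t
  proof -
    have "(\<Sum>i\<le>d - i0. pmul (P (i0 + i)) (H (i0 + i)) t) = (\<Sum>i\<in>{i0..d}. pmul (P i) (H i) t)"
      using \<open>i0 \<le> d\<close> by (simp add: sum.atLeastAtMost_shift_0 atLeast0AtMost)
    also have "\<dots> = (\<Sum>i\<le>d. pmul (P i) (H i) t)"
      by (rule sum.mono_neutral_left) (auto simp: below_i0)
    finally show ?thesis .
  qed
  then have "nondegenerate_relation K (d - i0) (\<lambda>i. H (i0 + i))"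
    unfolding nondegenerate_relation_def using assms \<open>i0 \<le> d\<close> \<open>P i0 \<noteq> 0\<close>
    by (intro exI[of _ "\<lambda>i. P (i0 + i)"]) (auto simp: fun_eq_iff)
  then show ?thesis
    using \<open>i0 \<le> d\<close> by (intro exI[of _ i0] exI[of _ "d - i0"]) simp
qed

lemma nondegenerate_relation_reverse:
  assumes "nondegenerate_relation K L H"
  shows "nondegenerate_relation K L (\<lambda>i. H (L - i))"
proof -
  obtain A where A: "\<forall>i\<le>L. poly_over K (A i)" "A 0 \<noteq> 0" "A L \<noteq> 0"
    "(\<lambda>t. \<Sum>i\<le>L. pmul (A i) (H i) t) = (\<lambda>_. 0)"
    using assms unfolding nondegenerate_relation_def by blast
  have "(\<Sum>i\<le>L. pmul (A (L - i)) (H (L - i)) t) = (\<Sum>i\<le>L. pmul (A i) (H i) t)" for t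
    using sum.atLeastAtMost_rev[of "\<lambda>i. pmul (A i) (H i) t" 0 L] by (simp add: atLeast0AtMost)
  then show ?thesis
    unfolding nondegenerate_relation_def using A
    by (intro exI[of _ "\<lambda>i. A (L - i)"]) (auto simp: fun_eq_iff)
qed

lemma nondegenerate_relation_hsubst:
  assumes K: "ring_closed K" and "nondegenerate_relation K L H" "s > 0"
  shows "nondegenerate_relation K L (\<lambda>i. hsubst (real s) (H i))"
proof -
  obtain A where A: "\<forall>i\<le>L. poly_over K (A i)" "A 0 \<noteq> 0" "A L \<noteq> 0"
    "(\<lambda>t. \<Sum>i\<le>L. pmul (A i) (H i) t) = (\<lambda>_. 0)"
    using assms(2) unfolding nondegenerate_relation_def by blast
  define A' where "A' i = pcompose (A i) (monom 1 s)" for i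
  have "(\<Sum>i\<le>L. pmul (A' i) (hsubst (real s) (H i)) t) = (\<Sum>i\<le>L. pmul (A i) (H i) (t / real s))" for t
    using \<open>s > 0\<close> by (simp add: A'_def pmul_pcompose_monom) (simp add: hsubst_def)
  moreover have "A' i \<noteq> 0" if "A i \<noteq> 0" for i
    using that pcompose_eq_0[of "A i" "monom 1 s"] \<open>s > 0\<close> by (auto simp: A'_def degree_monom_eq)
  ultimately show ?thesis
    unfolding nondegenerate_relation_def using A
    by (intro exI[of _ A']) (auto simp: fun_eq_iff A'_def poly_over_pcompose_monom[OF K] dest: fun_cong)
qed

lemma frac_span_recurrence_forward:
  fixes H :: "nat \<Rightarrow> real \<Rightarrow> complex"
  assumes K: "ring_closed K"
    and rel: "\<And>a. a \<le> T \<Longrightarrow> nondegenerate_relation K L (\<lambda>i. H (a + i))"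
    and init: "\<And>a. a < L \<Longrightarrow> H a \<in> frac_span K B"
  shows "n \<le> T + L \<Longrightarrow> H n \<in> frac_span K B"
proof (induction n rule: less_induct)
  case (less n)
  show ?case
  proof (cases "n < L")
    case True
    then show ?thesis
      by (rule init)
  next
    case False
    then have "nondegenerate_relation K L (\<lambda>i. H (n - L + i))"
      using less.prems by (intro rel) simp
    then obtain A where A: "\<forall>i\<le>L. poly_over K (A i)" "A L \<noteq> 0"
      "(\<lambda>t. \<Sum>i\<le>L. pmul (A i) (H (n - L + i)) t) = (\<lambda>_. 0)"
      unfolding nondegenerate_relation_def by blast
    have "pmul (A L) (H n) = (\<lambda>t. \<Sum>i<L. pmul (- A i) (H (n - L + i)) t)"
    proof
      fix t
      have "pmul (A L) (H n) t + (\<Sum>i<L. pmul (A i) (H (n - L + i)) t) = 0"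
        using fun_cong[OF A(3), of t] False by (simp add: lessThan_Suc_atMost[symmetric] add.commute)
      then show "pmul (A L) (H n) t = (\<Sum>i<L. pmul (- A i) (H (n - L + i)) t)"
        by (simp add: pmul_uminus sum_negf eq_neg_iff_add_eq_0)
    qed
    moreover have "H (n - L + i) \<in> frac_span K B" if "i < L" for i
      using that False less.prems by (intro less.IH) linarith+
    moreover have "poly_over K (- A i)" if "i < L" for i
      using that A(1) by (simp add: poly_over_uminus[OF K])
    ultimately show ?thesis
      using A(1,2) frac_span_closed[OF K, of "{..<L}" "A L" "\<lambda>i. - A i" "\<lambda>i. H (n - L + i)" B "H n"]
      by simp
  qed
qed

lemma frac_span_recurrence:
  fixes H :: "int \<Rightarrow> real \<Rightarrow> complex" and T :: nat
  assumes K: "ring_closed K"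
    and rel: "\<And>a. \<bar>a\<bar> \<le> T \<Longrightarrow> nondegenerate_relation K L (\<lambda>i. H (a + int i))"
    and init: "\<And>a. 0 \<le> a \<Longrightarrow> a < int L \<Longrightarrow> H a \<in> frac_span K B"
    and "\<bar>a\<bar> \<le> T"
  shows "H a \<in> frac_span K B"
proof (cases "a \<ge> 0")
  case True
  have "H (int (nat a)) \<in> frac_span K B"
  proof (rule frac_span_recurrence_forward[OF K, where H="\<lambda>n. H (int n)" and T=T])
    show "nondegenerate_relation K L (\<lambda>i. H (int (b + i)))" if "b \<le> T" for b
      using rel[of "int b"] that by simp
    show "H (int b) \<in> frac_span K B" if "b < L" for b
      using init that by simp
    show "nat a \<le> T + L"
      using \<open>\<bar>a\<bar> \<le> T\<close> by (simp add: nat_le_iff)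
  qed
  then show ?thesis
    using True by simp
next
  case False
  \<comment> \<open>the backward recurrence is the forward one for the reflected sequence (this uses \<open>A 0 \<noteq> 0\<close>)\<close>
  define H' where "H' n = H (int L - 1 - int n)" for n
  have "H' (nat (int L - 1 - a)) \<in> frac_span K B"
  proof (rule frac_span_recurrence_forward[OF K, where H=H' and T="T - 1"])
    show "nondegenerate_relation K L (\<lambda>i. H' (b + i))" if "b \<le> T - 1" for b
    proof -
      have "\<bar>- 1 - int b\<bar> \<le> T"
        using that False \<open>\<bar>a\<bar> \<le> T\<close> by linarith
      then have "nondegenerate_relation K L (\<lambda>i. H (- 1 - int b + int (L - i)))"
        by (intro nondegenerate_relation_reverse rel)
      then show ?thesis
        by (rule nondegenerate_relation_cong) (simp add: H'_def of_nat_diff algebra_simps)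
    qed
    show "H' b \<in> frac_span K B" if "b < L" for b
      using that unfolding H'_def by (intro init) auto
    show "nat (int L - 1 - a) \<le> T - 1 + L"
      using False \<open>\<bar>a\<bar> \<le> T\<close> by linarith
  qed
  then show ?thesis
    using False unfolding H'_def by simp
qed

lemma frac_span_grid:
  fixes g :: "int \<Rightarrow> int \<Rightarrow> real \<Rightarrow> complex" and T L1 L2 :: nat
  defines "B \<equiv> (\<lambda>(a, b). g (int a) (int b)) ` ({..<L1} \<times> {..<L2})"
  assumes K: "ring_closed K" and "L2 \<le> T"
    and rel1: "\<And>a b. \<bar>a\<bar> \<le> T \<Longrightarrow> \<bar>b\<bar> \<le> T \<Longrightarrow> nondegenerate_relation K L1 (\<lambda>i. g (a + int i) b)"
    and rel2: "\<And>a b. \<bar>a\<bar> \<le> T \<Longrightarrow> \<bar>b\<bar> \<le> T \<Longrightarrow> nondegenerate_relation K L2 (\<lambda>i. g a (b + int i))"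
    and "\<bar>a\<bar> \<le> T" "\<bar>b\<bar> \<le> T"
  shows "g a b \<in> frac_span K B"
proof -
  have "finite B"
    unfolding B_def by simp
  have base: "g a b \<in> frac_span K B" if "0 \<le> a" "a < int L1" "0 \<le> b" "b < int L2" for a b
  proof (rule basis_in_frac_span[OF K \<open>finite B\<close>])
    have "g a b = (\<lambda>(a, b). g (int a) (int b)) (nat a, nat b)" "(nat a, nat b) \<in> {..<L1} \<times> {..<L2}"
      using that by auto
    then show "g a b \<in> B"
      unfolding B_def by (rule image_eqI)
  qed
  have column: "g a b \<in> frac_span K B" if "\<bar>a\<bar> \<le> T" "0 \<le> b" "b < int L2" for a b
  proof (rule frac_span_recurrence[OF K, where H="\<lambda>a. g a b"])
    have "\<bar>b\<bar> \<le> T"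
      using that \<open>L2 \<le> T\<close> by linarith
    then show "nondegenerate_relation K L1 (\<lambda>i. g (a' + int i) b)" if "\<bar>a'\<bar> \<le> T" for a'
      using rel1 that by blast
    show "g a' b \<in> frac_span K B" if "0 \<le> a'" "a' < int L1" for a'
      using base that \<open>0 \<le> b\<close> \<open>b < int L2\<close> by blast
  qed (rule that(1))
  show ?thesis
  proof (rule frac_span_recurrence[OF K, where H="g a"])
    show "nondegenerate_relation K L2 (\<lambda>i. g a (b' + int i))" if "\<bar>b'\<bar> \<le> T" for b'
      using rel2 that \<open>\<bar>a\<bar> \<le> T\<close> by blast
    show "g a b' \<in> frac_span K B" if "0 \<le> b'" "b' < int L2" for b'
      using column that \<open>\<bar>a\<bar> \<le> T\<close> by blast
  qed (rule \<open>\<bar>b\<bar> \<le> T\<close>)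
qed

section \<open>Clearing the denominators of the exponents\<close>

lemma powr_int_shift:
  assumes "(\<rho>::real) > 0"
  shows "\<rho> powr real_of_int (a - int k) * \<rho> ^ (k + i) = \<rho> powr real_of_int (a + int i)"
  using assms by (simp add: powr_realpow[symmetric] powr_add[symmetric])

lemma nondegenerate_relation_scaled:
  assumes K: "ring_closed K" and rel: "nondegenerate_relation K L (\<lambda>i. hsubst (\<rho> ^ (k + i)) F)"
    and "\<rho> > 0" "s > 0" "real s = c * \<rho> powr real_of_int (a - int k)"
  shows "nondegenerate_relation K L (\<lambda>i. hsubst (c * \<rho> powr real_of_int (a + int i)) F)"
proof (rule nondegenerate_relation_cong)
  show "nondegenerate_relation K L (\<lambda>i. hsubst (real s) (hsubst (\<rho> ^ (k + i)) F))"
    using nondegenerate_relation_hsubst[OF K rel \<open>s > 0\<close>] .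
  show "hsubst (real s) (hsubst (\<rho> ^ (k + i)) F) = hsubst (c * \<rho> powr real_of_int (a + int i)) F" for i
    using powr_int_shift[OF \<open>\<rho> > 0\<close>, of a k i] by (simp add: hsubst_hsubst assms(5) mult.assoc)
qed

lemma rat_powr_int_common_denominator:
  fixes x :: real and M :: nat
  assumes "x \<in> \<rat>" "x > 0"
  shows "\<exists>c::nat. c > 0 \<and> (\<forall>a::int. \<bar>a\<bar> \<le> M \<longrightarrow> (\<exists>s::nat. s > 0 \<and> real s = real c * x powr a))"
proof -
  obtain u v where uv: "x = of_int u / of_int v" "v > 0"
    using Rats_cases'[OF assms(1)] by metis
  then have "u > 0"
    using assms(2) by (simp add: zero_less_divide_iff)
  define p where "p = nat u"
  define q where "q = nat v"
  have pq: "p > 0" "q > 0" "x = real p / real q"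
    using uv \<open>u > 0\<close> unfolding p_def q_def by auto
  have "\<exists>s::nat. s > 0 \<and> real s = real ((p * q) ^ M) * x powr a" if "\<bar>a\<bar> \<le> M" for a :: int
  proof (cases "a \<ge> 0")
    case True
    define n where "n = nat a"
    define k where "k = M - n"
    have "a = int n" "M = n + k"
      using True that unfolding n_def k_def by auto
    moreover have "x powr a = (real p / real q) ^ n"
      using pq \<open>a = int n\<close> by (simp add: powr_realpow)
    ultimately show ?thesis
      using pq(1,2) by (intro exI[of _ "p ^ (n + n + k) * q ^ k"]) (simp add: power_add power_mult_distrib field_simps)
  next
    case False
    define n where "n = nat (- a)"
    define k where "k = M - n"
    have "a = - int n" "M = n + k"
      using False that unfolding n_def k_def by auto
    moreover have "x powr a = (real q / real p) ^ n"
      using pq \<open>a = - int n\<close> by (simp add: powr_minus powr_realpow power_divide)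
    ultimately show ?thesis
      using pq(1,2) by (intro exI[of _ "p ^ k * q ^ (n + n + k)"]) (simp add: power_add power_mult_distrib field_simps)
  qed
  then show ?thesis
    using pq by (intro exI[of _ "(p * q) ^ M"]) auto
qed

lemma rat_powr_int_pair_common_denominator:
  fixes \<alpha> \<beta> :: real and M :: nat
  assumes "\<alpha> \<in> \<rat>" "\<beta> \<in> \<rat>" "\<alpha> > 0" "\<beta> > 0"
  shows "\<exists>l::nat. l > 0 \<and> (\<forall>a b::int. \<bar>a\<bar> \<le> M \<and> \<bar>b\<bar> \<le> M \<longrightarrow>
           (\<exists>s::nat. s > 0 \<and> real s = real l * (\<alpha> powr a * \<beta> powr b)))"
proof -
  obtain c1 where c1: "c1 > 0" "\<forall>a::int. \<bar>a\<bar> \<le> M \<longrightarrow> (\<exists>s::nat. s > 0 \<and> real s = real c1 * \<alpha> powr a)"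
    using rat_powr_int_common_denominator[OF assms(1,3)] by blast
  obtain c2 where c2: "c2 > 0" "\<forall>b::int. \<bar>b\<bar> \<le> M \<longrightarrow> (\<exists>s::nat. s > 0 \<and> real s = real c2 * \<beta> powr b)"
    using rat_powr_int_common_denominator[OF assms(2,4)] by blast
  have "\<exists>s::nat. s > 0 \<and> real s = real (c1 * c2) * (\<alpha> powr a * \<beta> powr b)"
    if "\<bar>a\<bar> \<le> M" "\<bar>b\<bar> \<le> M" for a b :: int
  proof -
    obtain s1 where s1: "s1 > 0" "real s1 = real c1 * \<alpha> powr a"
      using c1(2) \<open>\<bar>a\<bar> \<le> M\<close> by blast
    obtain s2 where s2: "s2 > 0" "real s2 = real c2 * \<beta> powr b"
      using c2(2) \<open>\<bar>b\<bar> \<le> M\<close> by blast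
    have "real (s1 * s2) = real (c1 * c2) * (\<alpha> powr a * \<beta> powr b)"
      by (simp only: of_nat_mult s1(2) s2(2) mult_ac)
    then show ?thesis
      using s1(1) s2(1) by (intro exI[of _ "s1 * s2"]) simp
  qed
  then show ?thesis
    using c1(1) c2(1) by (intro exI[of _ "c1 * c2"]) simp
qed

lemma substitutions_in_frac_span:
  fixes \<alpha> \<beta> :: real and F :: "real \<Rightarrow> complex" and T :: nat
  assumes K: "ring_closed K"
    and "\<alpha> \<in> \<rat>" "\<beta> \<in> \<rat>" "\<alpha> > 0" "\<beta> > 0"
    and "\<forall>i\<le>d1. poly_over K (P i)" "P d1 \<noteq> 0"
    and "(\<lambda>x. \<Sum>i\<le>d1. pmul (P i) (hsubst (\<alpha> ^ i) F) x) = (\<lambda>_. 0)"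
    and "\<forall>i\<le>d2. poly_over K (Q i)" "Q d2 \<noteq> 0"
    and "(\<lambda>x. \<Sum>i\<le>d2. pmul (Q i) (hsubst (\<beta> ^ i) F) x) = (\<lambda>_. 0)"
  shows "\<exists>l::nat. l > 0 \<and> (\<exists>B. finite B \<and> card B \<le> d1 * d2 \<and> (\<forall>a b. \<bar>a\<bar> \<le> T \<and> \<bar>b\<bar> \<le> T \<longrightarrow>
           hsubst (\<alpha> powr real_of_int a * \<beta> powr real_of_int b) (hsubst (real l) F) \<in> frac_span K B))"
proof -
  obtain i0 L1 where "i0 + L1 = d1" and rel\<alpha>: "nondegenerate_relation K L1 (\<lambda>i. hsubst (\<alpha> ^ (i0 + i)) F)"
    using nondegenerate_relation_trim[OF assms(6-8)] by blast
  obtain j0 L2 where "j0 + L2 = d2" and rel\<beta>: "nondegenerate_relation K L2 (\<lambda>i. hsubst (\<beta> ^ (j0 + i)) F)"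
    using nondegenerate_relation_trim[OF assms(9-11)] by blast
  define M where "M = T + L2 + d1 + d2"
  obtain l where "l > 0" and l: "\<And>a b. \<bar>a\<bar> \<le> M \<Longrightarrow> \<bar>b\<bar> \<le> M \<Longrightarrow>
      \<exists>s::nat. s > 0 \<and> real s = real l * (\<alpha> powr a * \<beta> powr b)"
    using rat_powr_int_pair_common_denominator[OF assms(2-5), where M=M] by blast
  define g where "g a b = hsubst (real l * (\<alpha> powr a * \<beta> powr b)) F" for a b :: int
  define B where "B = (\<lambda>(a, b). g (int a) (int b)) ` ({..<L1} \<times> {..<L2})"
  have rel1: "nondegenerate_relation K L1 (\<lambda>i. g (a + int i) b)" if "\<bar>a\<bar> \<le> T + L2" "\<bar>b\<bar> \<le> T + L2" for a b
  proof -
    have "\<bar>a - int i0\<bar> \<le> M" "\<bar>b\<bar> \<le> M"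
      using that \<open>i0 + L1 = d1\<close> unfolding M_def by linarith+
    then obtain s where "s > 0" "real s = real l * (\<alpha> powr (a - int i0) * \<beta> powr b)"
      using l by blast
    then have "nondegenerate_relation K L1 (\<lambda>i. hsubst ((real l * \<beta> powr b) * \<alpha> powr (a + int i)) F)"
      by (intro nondegenerate_relation_scaled[OF K rel\<alpha> \<open>\<alpha> > 0\<close>]) (simp_all only: mult_ac)
    then show ?thesis
      by (rule nondegenerate_relation_cong) (simp only: g_def mult_ac)
  qed
  have rel2: "nondegenerate_relation K L2 (\<lambda>i. g a (b + int i))" if "\<bar>a\<bar> \<le> T + L2" "\<bar>b\<bar> \<le> T + L2" for a b
  proof -
    have "\<bar>a\<bar> \<le> M" "\<bar>b - int j0\<bar> \<le> M"
      using that \<open>j0 + L2 = d2\<close> unfolding M_def by linarith+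
    then obtain s where "s > 0" "real s = real l * (\<alpha> powr a * \<beta> powr (b - int j0))"
      using l by blast
    then have "nondegenerate_relation K L2 (\<lambda>i. hsubst ((real l * \<alpha> powr a) * \<beta> powr (b + int i)) F)"
      by (intro nondegenerate_relation_scaled[OF K rel\<beta> \<open>\<beta> > 0\<close>]) (simp_all only: mult_ac)
    then show ?thesis
      by (rule nondegenerate_relation_cong) (simp only: g_def mult_ac)
  qed
  have "finite B"
    unfolding B_def by simp
  have "card B \<le> L1 * L2"
    unfolding B_def using card_image_le[of "{..<L1} \<times> {..<L2}"] by (simp add: card_cartesian_product)
  also have "\<dots> \<le> d1 * d2"
    using \<open>i0 + L1 = d1\<close> \<open>j0 + L2 = d2\<close> by (intro mult_mono) auto
  finally have "card B \<le> d1 * d2" .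
  have "g a b \<in> frac_span K B" if "\<bar>a\<bar> \<le> T" "\<bar>b\<bar> \<le> T" for a b
    unfolding B_def using rel1 rel2 that by (intro frac_span_grid[OF K, of L2 "T + L2"]) auto
  moreover have "hsubst (\<alpha> powr a * \<beta> powr b) (hsubst (real l) F) = g a b" for a b
    by (simp add: g_def hsubst_hsubst mult.commute)
  ultimately show ?thesis
    using \<open>l > 0\<close> \<open>finite B\<close> \<open>card B \<le> d1 * d2\<close> by (intro exI[of _ l] conjI exI[of _ B]) auto
qed

lemma powr_int_mult_power:
  assumes "(\<alpha>::real) > 0" "(\<beta>::real) > 0"
  shows "(\<alpha> powr real_of_int n * \<beta> powr real_of_int m) ^ j
    = \<alpha> powr real_of_int (n * int j) * \<beta> powr real_of_int (m * int j)"
  using assms by (simp add: power_mult_distrib powr_realpow[symmetric] powr_powr)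

theorem mainTheorem12:
  fixes K :: "complex set" and \<alpha> \<beta> :: real and F :: "real \<Rightarrow> complex"
    and d1 d2 :: nat and P Q :: "nat \<Rightarrow> complex poly" and N :: int
  assumes "number_field K"
    and "\<alpha> \<in> \<rat>" "\<beta> \<in> \<rat>" "\<alpha> > 0" "\<beta> > 0" "mult_indep \<alpha> \<beta>"
    and "hahn_series K F"
    and "\<forall>i\<le>d1. poly_over K (P i)" "P d1 \<noteq> 0"
    and "(\<lambda>x. \<Sum>i\<le>d1. pmul (P i) (hsubst (\<alpha> ^ i) F) x) = (\<lambda>_. 0)"
    and "\<forall>i\<le>d2. poly_over K (Q i)" "Q d2 \<noteq> 0"
    and "(\<lambda>x. \<Sum>i\<le>d2. pmul (Q i) (hsubst (\<beta> ^ i) F) x) = (\<lambda>_. 0)"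
    and "N > 0"
  shows "\<exists>l::nat. l > 0 \<and> (\<forall>m n :: int. \<bar>m\<bar> < N \<and> \<bar>n\<bar> < N \<longrightarrow>
           mahler K (\<alpha> powr (real_of_int n) * \<beta> powr (real_of_int m)) (hsubst (real l) F))"
proof -
  have K: "ring_closed K"
    using assms(1) by (rule number_field_ring_closed)
  define e where "e = d1 * d2"
  obtain l B where "l > 0" "finite B" "card B \<le> e" and span: "\<forall>a b. \<bar>a\<bar> \<le> nat N * e \<and> \<bar>b\<bar> \<le> nat N * e \<longrightarrow>
      hsubst (\<alpha> powr real_of_int a * \<beta> powr real_of_int b) (hsubst (real l) F) \<in> frac_span K B"
    using substitutions_in_frac_span[OF K assms(2-5,8-13), of "nat N * e"] unfolding e_def by (elim exE conjE)
  have "mahler K (\<alpha> powr n * \<beta> powr m) (hsubst (real l) F)" if "\<bar>m\<bar> < N" "\<bar>n\<bar> < N" for m n :: int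
  proof -
    have bound: "\<bar>k * int j\<bar> \<le> nat N * e" if "\<bar>k\<bar> < N" "j \<le> e" for k :: int and j
      using that \<open>N > 0\<close> by (simp add: abs_mult mult_mono)
    have "hsubst ((\<alpha> powr n * \<beta> powr m) ^ j) (hsubst (real l) F) \<in> frac_span K B" if "j \<le> e" for j
      unfolding powr_int_mult_power[OF assms(4,5)] by (intro span[rule_format] conjI bound that \<open>\<bar>m\<bar> < N\<close> \<open>\<bar>n\<bar> < N\<close>)
    then have "\<exists>R. (\<forall>j\<le>e. poly_over K (R j)) \<and> (\<exists>j\<le>e. R j \<noteq> 0) \<and>
        (\<forall>t. (\<Sum>j\<le>e. pmul (R j) (hsubst ((\<alpha> powr n * \<beta> powr m) ^ j) (hsubst (real l) F)) t) = 0)"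
      by (rule frac_span_dependent[OF K \<open>finite B\<close> \<open>card B \<le> e\<close>])
    then show ?thesis
      unfolding mahler_def fun_eq_iff by (intro exI[of _ e])
  qed
  then show ?thesis
    using \<open>l > 0\<close> by (intro exI[of _ l]) simp
qed

end
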